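(* Consider the $(1+1)$-dimensional Born-Infeld system with $a=c=1$ for a density $\rho(t,x)>0$ and a momentum $p(t,x)$, $(t,x)\in\mathbb{R}^2$: $$\frac{\partial\rho}{\partial t}=-\frac{\partial}{\partial x}\left(p\frac{\sqrt{\rho^2+1}}{\sqrt{1+p^2}}\right),\qquad \frac{\partial p}{\partial t}=-\frac{\partial}{\partial x}\left(\rho\frac{\sqrt{1+p^2}}{\sqrt{\rho^2+1}}\right),$$ restricted to states satisfying the constraint $p\rho=1$. Assume that the densities $\rho$ under consideration satisfy $0<\gamma:=\inf_{(t,x)\in\mathbb{R}^2}\rho(t,x)$ and $\beta:=\sup_{(t,x)\in\mathbb{R}^2}\rho(t,x)<\infty$. Then the constant state $(p_e,\rho_e)=(1,1)$ is a Lyapunov-stable equilibrium point of this system on the constraint set $p\rho=1$, where stability is measured in the norm $$\|\Delta u\|^2=\int_{\mathbb{R}}\frac{(\Delta\rho)^2}{\beta}\,\mathrm{d}x,\qquad \Delta u=(p-p_e,\rho-\rho_e),\ \Delta\rho=\rho-\rho_e.$$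
   Context: An equilibrium point $u_e$ of an evolution equation $\partial_t u=X(u)$ is a state with $X(u_e)=0$. It is Lyapunov stable with respect to a norm $\|\cdot\|$ if for every $\varepsilon>0$ there is $\sigma>0$ such that every solution $u(t,\cdot)$ with $\|u(t_0,\cdot)-u_e\|<\sigma$ satisfies $\|u(t,\cdot)-u_e\|<\varepsilon$ for all $t\ge t_0$. The system is Hamiltonian with Hamiltonian $H=\int\sqrt{\rho^2c^2+a^2}\sqrt{c^2+p^2}\,\mathrm{d}x$ (here $a=c=1$) and Poisson bracket $\{F,G\}=-\int\left(\frac{\delta F}{\delta\rho}\partial_x\frac{\delta G}{\delta p}+\frac{\delta F}{\delta p}\partial_x\frac{\delta G}{\delta\rho}\right)\mathrm{d}x$. *)

theory Defs
  imports "HOL-Analysis.Analysis"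
begin

text \<open>Born-Infeld system with a = c = 1. A state is a pair of functions
  rho, p :: real => real => real (arguments: time t, space x).\<close>

definition BI_flux_rho :: "real \<Rightarrow> real \<Rightarrow> real" where
  "BI_flux_rho r q = q * sqrt (r\<^sup>2 + 1) / sqrt (1 + q\<^sup>2)"

definition BI_flux_p :: "real \<Rightarrow> real \<Rightarrow> real" where
  "BI_flux_p r q = r * sqrt (1 + q\<^sup>2) / sqrt (r\<^sup>2 + 1)"

definition BI_solution :: "(real \<Rightarrow> real \<Rightarrow> real) \<Rightarrow> (real \<Rightarrow> real \<Rightarrow> real) \<Rightarrow> bool" where
  "BI_solution rho p \<longleftrightarrow>
     (\<forall>t x. \<exists>D. ((\<lambda>s. rho s x) has_real_derivative (- D)) (at t) \<and>
                 ((\<lambda>y. BI_flux_rho (rho t y) (p t y)) has_real_derivative D) (at x)) \<and>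
     (\<forall>t x. \<exists>D. ((\<lambda>s. p s x) has_real_derivative (- D)) (at t) \<and>
                 ((\<lambda>y. BI_flux_p (rho t y) (p t y)) has_real_derivative D) (at x))"

definition rho_sup :: "(real \<Rightarrow> real \<Rightarrow> real) \<Rightarrow> real" where
  "rho_sup rho = (SUP tx \<in> UNIV. rho (fst tx) (snd tx))"

definition rho_inf :: "(real \<Rightarrow> real \<Rightarrow> real) \<Rightarrow> real" where
  "rho_inf rho = (INF tx \<in> UNIV. rho (fst tx) (snd tx))"

definition BI_dev_norm_sq :: "real \<Rightarrow> (real \<Rightarrow> real \<Rightarrow> real) \<Rightarrow> real \<Rightarrow> ennreal" where
  "BI_dev_norm_sq beta rho t = (\<integral>\<^sup>+ x. ennreal ((rho t x - 1)\<^sup>2 / beta) \<partial>lborel)"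

end

theory Submission
  imports Defs
begin

text \<open>On the constraint set \<open>p \<rho> = 1\<close> the flux of \<open>\<rho>\<close> is identically \<open>1\<close>, so
  \<open>\<partial>\<^sub>t \<rho> = 0\<close>: every constrained solution has a time-independent density, and the
  deviation norm is conserved. Hence \<open>\<sigma> = \<epsilon>\<close> works.\<close>

lemma BI_flux_rho_constraint:
  assumes "r > 0" and "q * r = 1"
  shows "BI_flux_rho r q = 1"
proof -
  have q: "q = 1 / r"
    using assms by (simp add: field_simps)
  have "1 + q\<^sup>2 = (r\<^sup>2 + 1) / r\<^sup>2"
    using \<open>r > 0\<close> by (simp add: q field_simps power2_eq_square)
  then have "sqrt (1 + q\<^sup>2) = sqrt (r\<^sup>2 + 1) / r"
    using \<open>r > 0\<close> by (simp add: real_sqrt_divide)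
  moreover have "sqrt (r\<^sup>2 + 1) > 0"
    by (simp add: add_pos_nonneg add_nonneg_pos)
  ultimately show ?thesis
    using \<open>r > 0\<close> unfolding BI_flux_rho_def by (simp add: q field_simps)
qed

lemma BI_solution_constraint_rho_stationary:
  assumes sol: "BI_solution rho p"
    and pos: "\<forall>t x. rho t x > 0"
    and constraint: "\<forall>t x. p t x * rho t x = 1"
  shows "rho t = rho t\<^sub>0"
proof
  fix x
  have "((\<lambda>s. rho s x) has_real_derivative 0) (at s)" for s
  proof -
    obtain D where time: "((\<lambda>s. rho s x) has_real_derivative (- D)) (at s)"
      and space: "((\<lambda>y. BI_flux_rho (rho s y) (p s y)) has_real_derivative D) (at x)"
      using sol unfolding BI_solution_def by blast
    have "(\<lambda>y. BI_flux_rho (rho s y) (p s y)) = (\<lambda>y. 1)"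
      using pos constraint BI_flux_rho_constraint by auto
    with space have "((\<lambda>y. 1) has_real_derivative D) (at x)"
      by simp
    then have "D = 0"
      using DERIV_const DERIV_unique by blast
    with time show ?thesis
      by simp
  qed
  then show "rho t x = rho t\<^sub>0 x"
    using DERIV_isconst_all by blast
qed

lemma BI_dev_norm_sq_conserved:
  assumes "BI_solution rho p"
    and "\<forall>t x. rho t x > 0"
    and "\<forall>t x. p t x * rho t x = 1"
  shows "BI_dev_norm_sq beta rho t = BI_dev_norm_sq beta rho t\<^sub>0"
  unfolding BI_dev_norm_sq_def
  using BI_solution_constraint_rho_stationary[OF assms, of t t\<^sub>0] by simp

theorem mainTheorem2:
  shows "\<forall>\<epsilon>>0. \<exists>\<sigma>>0. \<forall>rho p t\<^sub>0.
     BI_solution rho p \<longrightarrow>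
     (\<forall>t x. rho t x > 0) \<longrightarrow>
     (\<forall>t x. p t x * rho t x = 1) \<longrightarrow>
     0 < rho_inf rho \<longrightarrow>
     bdd_above (range (\<lambda>tx. rho (fst tx) (snd tx))) \<longrightarrow>
     BI_dev_norm_sq (rho_sup rho) rho t\<^sub>0 < ennreal (\<sigma>\<^sup>2) \<longrightarrow>
     (\<forall>t\<ge>t\<^sub>0. BI_dev_norm_sq (rho_sup rho) rho t < ennreal (\<epsilon>\<^sup>2))"
proof (intro allI impI)
  fix \<epsilon> :: real
  assume "\<epsilon> > 0"
  show "\<exists>\<sigma>>0. \<forall>rho p t\<^sub>0.
     BI_solution rho p \<longrightarrow>
     (\<forall>t x. rho t x > 0) \<longrightarrow>
     (\<forall>t x. p t x * rho t x = 1) \<longrightarrow>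
     0 < rho_inf rho \<longrightarrow>
     bdd_above (range (\<lambda>tx. rho (fst tx) (snd tx))) \<longrightarrow>
     BI_dev_norm_sq (rho_sup rho) rho t\<^sub>0 < ennreal (\<sigma>\<^sup>2) \<longrightarrow>
     (\<forall>t\<ge>t\<^sub>0. BI_dev_norm_sq (rho_sup rho) rho t < ennreal (\<epsilon>\<^sup>2))"
  proof (intro exI[of _ \<epsilon>] conjI allI impI)
    fix rho p :: "real \<Rightarrow> real \<Rightarrow> real" and t\<^sub>0 t :: real
    assume "BI_solution rho p" "\<forall>t x. rho t x > 0" "\<forall>t x. p t x * rho t x = 1"
      and "BI_dev_norm_sq (rho_sup rho) rho t\<^sub>0 < ennreal (\<epsilon>\<^sup>2)"
    then show "BI_dev_norm_sq (rho_sup rho) rho t < ennreal (\<epsilon>\<^sup>2)"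
      using BI_dev_norm_sq_conserved[of rho p "rho_sup rho" t t\<^sub>0] by simp
  qed (fact \<open>\<epsilon> > 0\<close>)
qed

end
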